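(* Let $W$ be a discrete memoryless channel with input alphabet $\mathbb{F}_q$ and let $m\ge1$. Then $C_{KV}(W^{\otimes m})=C_{KV}(W)^m$. In particular, if $C_{KV}(W)=1-\epsilon$ then $C_{KV}(W^{\otimes m})\ge1-m\epsilon$.
   Context: For memoryless channels $W$ (input $\mathcal{X}$, output $\mathcal{Y}$) and $W'$ (input $\mathcal{X}'$, output $\mathcal{Y}'$), the tensor product $W\otimes W'$ has input $\mathcal{X}\times\mathcal{X}'$, output $\mathcal{Y}\times\mathcal{Y}'$ and transition probabilities $(W\otimes W')(y,y'|x,x')=W(y|x)W'(y'|x')$; $W^{\otimes m}=W\otimes\cdots\otimes W$ ($m$ factors), with input alphabet $\mathbb{F}_q^m$ (identified with $\mathbb{F}_{q^m}$). For a channel with finite input alphabet $A$ and input uniformly distributed on $A$, the APP vector of output $y$ is $\pi_y=(\mathrm{prob}(\text{input}=a|y))_{a\in A}$ and the Koetter–Vardy capacity is $C_{KV}=\mathbb{E}(\sum_a\pi_y(a)^2)$, the expectation being over the channel output. *)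

theory Defs
  imports "HOL-Probability.Probability"
begin

text \<open>A discrete memoryless channel with input type 'a and output type 'b is a
  map from inputs to (discrete) output distributions: W x is the law of the
  output given input x, i.e. pmf (W x) y = W(y|x).\<close>
type_synonym ('a, 'b) channel = "'a \<Rightarrow> 'b pmf"

definition chan_tensor :: "('a, 'b) channel \<Rightarrow> ('c, 'd) channel \<Rightarrow> ('a \<times> 'c, 'b \<times> 'd) channel" where
  "chan_tensor W W' = (\<lambda>(x, x'). pair_pmf (W x) (W' x'))"

text \<open>m-fold tensor power; inputs and outputs are words (lists) of length m,
  W^{(m+1)} = W \<otimes> W^{(m)} via the first letter and the rest.\<close>
fun chan_pow :: "('a, 'b) channel \<Rightarrow> nat \<Rightarrow> ('a list, 'b list) channel" where
  "chan_pow W 0 = (\<lambda>_. return_pmf [])"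
| "chan_pow W (Suc m) =
     (\<lambda>xs. map_pmf (\<lambda>(y, ys). y # ys) (chan_tensor W (chan_pow W m) (hd xs, tl xs)))"

definition chan_output :: "'a set \<Rightarrow> ('a, 'b) channel \<Rightarrow> 'b pmf" where
  "chan_output A W = bind_pmf (pmf_of_set A) W"

text \<open>APP vector: posterior probability of input a given output y (uniform prior on A).\<close>
definition app_vec :: "'a set \<Rightarrow> ('a, 'b) channel \<Rightarrow> 'b \<Rightarrow> 'a \<Rightarrow> real" where
  "app_vec A W y a = pmf (pmf_of_set A) a * pmf (W a) y / pmf (chan_output A W) y"

definition C_KV :: "'a set \<Rightarrow> ('a, 'b) channel \<Rightarrow> real" where
  "C_KV A W = measure_pmf.expectation (chan_output A W) (\<lambda>y. \<Sum>a\<in>A. (app_vec A W y a)^2)"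

end

theory Submission
  imports Defs
begin

text \<open>With a uniform input on A \<times> B, the output law of W \<otimes> W' is the product of the two
  output laws and the APP vector factorises: pi at (y, y') evaluated at (a, b) is
  pi_y(a) * pi'_y'(b). Hence the sum of squared APP values factorises too, and its
  expectation under the product law is the product of expectations, so
  C_KV(W \<otimes> W') = C_KV(W) * C_KV(W'). The word channel of length m + 1 is W \<otimes> W^m up to
  the bijection (x, xs) \<mapsto> x # xs on inputs and outputs, which leaves C_KV unchanged; so
  C_KV(W^m) = C_KV(W)^m by induction. The bound is Bernoulli's inequality
  (1 - \<epsilon>)^m \<ge> 1 - m \<epsilon>, applicable because C_KV \<ge> 0 forces \<epsilon> \<le> 1.\<close>

lemma expectation_pair_pmf_mult:
  fixes f :: "'a \<Rightarrow> real" and g :: "'b \<Rightarrow> real"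
  assumes f: "\<And>x. 0 \<le> f x" and g: "\<And>y. 0 \<le> g y"
  shows "measure_pmf.expectation (pair_pmf P Q) (\<lambda>(x, y). f x * g y)
       = measure_pmf.expectation P f * measure_pmf.expectation Q g"
proof -
  have "(\<integral>\<^sup>+ z. ennreal ((\<lambda>(x, y). f x * g y) z) \<partial>pair_pmf P Q)
      = (\<integral>\<^sup>+ x. \<integral>\<^sup>+ y. ennreal (f x) * ennreal (g y) \<partial>Q \<partial>P)"
    by (simp add: nn_integral_pair_pmf' ennreal_mult f g)
  also have "\<dots> = (\<integral>\<^sup>+ x. ennreal (f x) \<partial>P) * (\<integral>\<^sup>+ y. ennreal (g y) \<partial>Q)"
    by (simp add: nn_integral_cmult nn_integral_multc)
  finally show ?thesis
    by (simp add: integral_eq_nn_integral enn2real_mult f g split_beta')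
qed

lemma C_KV_nonneg: "0 \<le> C_KV A W"
  unfolding C_KV_def by (rule integral_nonneg_AE) (simp add: sum_nonneg)

lemma pmf_chan_output:
  assumes "finite A" "A \<noteq> {}"
  shows "pmf (chan_output A W) y = (\<Sum>a\<in>A. pmf (W a) y) / card A"
  using assms by (simp add: chan_output_def pmf_bind integral_pmf_of_set)

lemma pmf_chan_tensor:
  "pmf (chan_tensor W W' (a, b)) (y, y') = pmf (W a) y * pmf (W' b) y'"
  by (simp add: chan_tensor_def pmf_pair)

lemma chan_output_tensor:
  fixes W :: "('a, 'b) channel" and W' :: "('c, 'd) channel"
  assumes "finite A" "A \<noteq> {}" "finite B" "B \<noteq> {}"
  shows "chan_output (A \<times> B) (chan_tensor W W')
       = pair_pmf (chan_output A W) (chan_output B W')"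
proof (rule pmf_eqI)
  fix z :: "'b \<times> 'd"
  obtain y y' where z: "z = (y, y')" by fastforce
  show "pmf (chan_output (A \<times> B) (chan_tensor W W')) z
           = pmf (pair_pmf (chan_output A W) (chan_output B W')) z"
    using assms
    by (simp add: z pmf_chan_output pmf_pair pmf_chan_tensor card_cartesian_product
        sum.cartesian_product' sum_product)
qed

lemma app_vec_tensor:
  fixes W :: "('a, 'b) channel" and W' :: "('c, 'd) channel"
  assumes "finite A" "A \<noteq> {}" "finite B" "B \<noteq> {}"
  shows "app_vec (A \<times> B) (chan_tensor W W') (y, y') (a, b)
       = app_vec A W y a * app_vec B W' y' b"
  using assms
  by (auto simp: app_vec_def chan_output_tensor pmf_pair pmf_chan_tensor
      card_cartesian_product indicator_def)

theorem C_KV_tensor: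
  fixes W :: "('a, 'b) channel" and W' :: "('c, 'd) channel"
  assumes "finite A" "A \<noteq> {}" "finite B" "B \<noteq> {}"
  shows "C_KV (A \<times> B) (chan_tensor W W') = C_KV A W * C_KV B W'"
proof -
  have "(\<Sum>ab\<in>A \<times> B. (app_vec (A \<times> B) (chan_tensor W W') z ab)\<^sup>2)
      = (\<lambda>(y, y'). (\<Sum>a\<in>A. (app_vec A W y a)\<^sup>2) * (\<Sum>b\<in>B. (app_vec B W' y' b)\<^sup>2)) z"
    for z
    using assms
    by (cases z) (simp add: sum.cartesian_product' app_vec_tensor power_mult_distrib
        sum_product)
  then show ?thesis
    using assms
    by (simp add: C_KV_def chan_output_tensor expectation_pair_pmf_mult sum_nonneg)
qed

lemma chan_output_relabel:
  assumes "finite A" "A \<noteq> {}" "inj_on f A" "\<And>a. a \<in> A \<Longrightarrow> V (f a) = map_pmf g (W a)"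
  shows "chan_output (f ` A) V = map_pmf g (chan_output A W)"
proof -
  have "bind_pmf (pmf_of_set A) (\<lambda>a. V (f a)) = bind_pmf (pmf_of_set A) (\<lambda>a. map_pmf g (W a))"
    using assms by (intro bind_pmf_cong) simp_all
  then show ?thesis
    using assms by (simp add: chan_output_def map_pmf_of_set_inj[symmetric] bind_map_pmf map_bind_pmf)
qed

lemma C_KV_relabel:
  assumes "finite A" "A \<noteq> {}" "inj_on f A" "inj g"
    and "\<And>a. a \<in> A \<Longrightarrow> V (f a) = map_pmf g (W a)"
  shows "C_KV (f ` A) V = C_KV A W"
proof -
  have "app_vec (f ` A) V (g y) (f a) = app_vec A W y a" if "a \<in> A" for y a
    using assms that by (simp add: app_vec_def chan_output_relabel pmf_map_inj' card_image)
  then have "(\<Sum>b\<in>f ` A. (app_vec (f ` A) V (g y) b)\<^sup>2) = (\<Sum>a\<in>A. (app_vec A W y a)\<^sup>2)" for y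
    using assms(3) by (simp add: sum.reindex)
  then show ?thesis
    using assms by (simp add: C_KV_def chan_output_relabel)
qed

lemma lists_length_Suc_eq_image_Cons:
  "{xs. length xs = Suc m} = (\<lambda>(x, xs). x # xs) ` (UNIV \<times> {xs. length xs = m})"
  by (auto simp: image_iff length_Suc_conv)

lemma finite_lists_length_eq_UNIV: "finite {xs :: 'a :: finite list. length xs = m}"
  using finite_lists_length_eq[of "UNIV :: 'a set" m] by simp

theorem C_KV_chan_pow:
  fixes W :: "('a :: finite, 'b) channel"
  shows "C_KV {xs. length xs = m} (chan_pow W m) = C_KV UNIV W ^ m"
proof (induction m)
  case 0
  have "{xs :: 'a list. length xs = 0} = {[]}" by auto
  then show ?case by (simp add: C_KV_def chan_output_def app_vec_def)
next
  case (Suc m)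
  let ?L = "{xs :: 'a list. length xs = m}"
  have L: "finite ?L" "?L \<noteq> {}"
    by (auto simp: finite_lists_length_eq_UNIV intro: exI[of _ "replicate m undefined"])
  have cons_inj: "inj (\<lambda>(x, xs). x # xs)" by (auto simp: inj_def)
  have "C_KV {xs. length xs = Suc m} (chan_pow W (Suc m))
      = C_KV (UNIV \<times> ?L) (chan_tensor W (chan_pow W m))"
    unfolding lists_length_Suc_eq_image_Cons using L
    by (intro C_KV_relabel) (auto intro: inj_on_subset[OF cons_inj] cons_inj)
  also have "\<dots> = C_KV UNIV W * C_KV ?L (chan_pow W m)"
    using L by (intro C_KV_tensor) simp_all
  finally show ?case using Suc.IH by simp
qed

theorem proposition5:
  fixes W :: "('a :: {finite, field}, 'b) channel" and m :: nat
  assumes "m \<ge> 1"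
  shows "C_KV {xs. length xs = m} (chan_pow W m) = C_KV UNIV W ^ m
         \<and> (\<forall>\<epsilon>::real. C_KV UNIV W = 1 - \<epsilon> \<longrightarrow>
              C_KV {xs. length xs = m} (chan_pow W m) \<ge> 1 - real m * \<epsilon>)"
proof (intro conjI allI impI)
  show "C_KV {xs. length xs = m} (chan_pow W m) = C_KV UNIV W ^ m"
    by (rule C_KV_chan_pow)
  fix \<epsilon> :: real
  assume "C_KV UNIV W = 1 - \<epsilon>"
  moreover have "-1 \<le> - \<epsilon>"
    using C_KV_nonneg[of UNIV W] calculation by simp
  ultimately show "C_KV {xs. length xs = m} (chan_pow W m) \<ge> 1 - real m * \<epsilon>"
    using Bernoulli_inequality[of "- \<epsilon>" m] by (simp add: C_KV_chan_pow)
qed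

end
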